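(* Let $0<\beta<1$ and let $N_a = N_a(N) \in (0, N]$ satisfy $c_1 N^\beta \le N_a \le c_2 N^\beta$ for constants $0<c_1\le c_2$ and all large $N$. Consider the activity recognition problem over the OR many-access channel defined in the context. Then every feasible activity recognition cost $\Omega_a$ satisfies $\Omega_a \ge 1-\beta$, and every $\Omega_a > 1/\ln 2$ is feasible. In particular, the minimum (infimum) feasible activity recognition cost lies in $[1-\beta, 1/\ln 2]$.
   Context: There are $N$ users; user $n$ is active ($s_n = 1$) with probability $N_a/N$, independently of the others, and inactive ($s_n=0$) otherwise. An activity recognition scheme of length $L$ consists of signature arrays $\underline{x}_1,\dots,\underline{x}_N \in \{0,1\}^L$ and a decoder $g : \{0,1\}^L \to \{0,1\}^N$. Each active user transmits its signature array and each inactive user transmits the all-zero array; the receiver observes the componentwise Boolean OR $\underline{y} = \bigvee_{n: s_n = 1} \underline{x}_n$ (the all-zero array if no user is active) and outputs $\hat{\underline{s}} = g(\underline{y})$. A cost $\Omega_a$ is feasible if there exists a sequence (indexed by $N$) of such schemes of length $\Omega_a N_a \log_2 N$ (rounded to an integer) for which $\Pr[\hat{\underline{s}} = \underline{s}] \to 1$ as $N \to \infty$. *)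

theory Defs
  imports Complex_Main
begin

text \<open>Users are indexed by {0..<N}; array positions by {0..<L}.
  A signature array of user n is the set X n of positions carrying a 1 (positions
  outside {0..<L} are ignored).\<close>

definition or_output :: "nat \<Rightarrow> (nat \<Rightarrow> nat set) \<Rightarrow> nat set \<Rightarrow> nat set" where
  "or_output L X S = {l. l < L \<and> (\<exists>n\<in>S. l \<in> X n)}"

definition success_prob ::
  "nat \<Rightarrow> real \<Rightarrow> nat \<Rightarrow> (nat \<Rightarrow> nat set) \<Rightarrow> (nat set \<Rightarrow> nat set) \<Rightarrow> real" where
  "success_prob N p L X g =
     (\<Sum>S\<in>Pow {0..<N}. if g (or_output L X S) = S
                          then p ^ card S * (1 - p) ^ (N - card S) else 0)"

definition feasible_cost :: "(nat \<Rightarrow> real) \<Rightarrow> real \<Rightarrow> bool" where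
  "feasible_cost Na \<Omega> \<longleftrightarrow>
     (\<exists>(X :: nat \<Rightarrow> nat \<Rightarrow> nat set) (g :: nat \<Rightarrow> nat set \<Rightarrow> nat set).
        (\<lambda>N. success_prob N (Na N / real N) (nat (round (\<Omega> * Na N * log 2 (real N))))
                (X N) (g N)) \<longlonglongrightarrow> 1)"

end

theory Submission
  imports Defs "HOL-Library.FuncSet" "HOL-Real_Asymp.Real_Asymp"
begin

text \<open>
  Converse: the decoder is correct on at most \<open>2^L\<close> activity patterns, and a pattern with at
  least \<open>K\<close> active users has probability at most \<open>p^K\<close>. By a Chernoff bound almost all the
  probability sits on patterns with at least \<open>t N p\<close> active users (any \<open>t < 1\<close>), so success forces
  \<open>2^L p^(t N\<^sub>a)\<close> to be of order one; with \<open>p \<approx> N^(\<beta>-1)\<close> this means \<open>L \<ge> t (1-\<beta>) N\<^sub>a log\<^sub>2 N\<close>.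

  Achievability: split the positions into \<open>w \<approx> t log\<^sub>2 N\<close> blocks of \<open>m \<approx> t N\<^sub>a / ln 2\<close> positions
  (any \<open>t > 1\<close>), let every user occupy one position per block, and declare active exactly the users
  all of whose positions are lit. An inactive user is misclassified only if in every block its
  position is shared with an active user. For a random design and at most \<open>t N\<^sub>a\<close> active users
  this has probability at most \<open>(1 - (1 - 1/m)^(t N\<^sub>a))^w \<le> 2^-w \<le> N^-t\<close>, so a union bound over the
  users, an upper-tail Chernoff bound and averaging over designs yield a good deterministic design.
\<close>

definition activity_weight :: "real \<Rightarrow> nat \<Rightarrow> nat set \<Rightarrow> real" where
  "activity_weight p N S = p ^ card S * (1 - p) ^ (N - card S)"

lemma activity_weight_nonneg: "0 \<le> p \<Longrightarrow> p \<le> 1 \<Longrightarrow> 0 \<le> activity_weight p N S"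
  by (simp add: activity_weight_def)

lemma activity_weight_generating_function:
  "(\<Sum>S\<in>Pow {0..<N}. activity_weight p N S * t ^ card S) = (p * t + (1 - p)) ^ N"
proof -
  have "(p * t + (1 - p)) ^ N = (\<Prod>_\<in>{0..<N}. p * t + (1 - p))"
    by simp
  also have "\<dots> = (\<Sum>S\<in>Pow {0..<N}. (\<Prod>_\<in>S. p * t) * (\<Prod>_\<in>{0..<N} - S. 1 - p))"
    by (rule prod_add) simp
  also have "\<dots> = (\<Sum>S\<in>Pow {0..<N}. activity_weight p N S * t ^ card S)"
  proof (rule sum.cong)
    fix S assume "S \<in> Pow {0..<N}"
    then have "card ({0..<N} - S) = N - card S"
      by (simp add: card_Diff_subset finite_subset)
    then show "(\<Prod>_\<in>S. p * t) * (\<Prod>_\<in>{0..<N} - S. 1 - p) = activity_weight p N S * t ^ card S"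
      by (simp add: activity_weight_def power_mult_distrib)
  qed simp
  finally show ?thesis ..
qed

lemma sum_activity_weight: "(\<Sum>S\<in>Pow {0..<N}. activity_weight p N S) = 1"
  using activity_weight_generating_function[of p N 1] by simp

lemma success_prob_eq:
  "success_prob N p L X g = (\<Sum>S\<in>{S\<in>Pow {0..<N}. g (or_output L X S) = S}. activity_weight p N S)"
  unfolding success_prob_def activity_weight_def by (subst sum.inter_filter) auto

lemma one_minus_success_prob:
  "1 - success_prob N p L X g = (\<Sum>S\<in>{S\<in>Pow {0..<N}. g (or_output L X S) \<noteq> S}. activity_weight p N S)"
proof -
  have "(\<Sum>S\<in>Pow {0..<N}. activity_weight p N S)
      = (\<Sum>S\<in>Pow {0..<N} \<inter> {S. g (or_output L X S) = S}. activity_weight p N S)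
        + (\<Sum>S\<in>Pow {0..<N} - {S. g (or_output L X S) = S}. activity_weight p N S)"
    by (rule sum.Int_Diff) simp
  then show ?thesis
    unfolding success_prob_eq sum_activity_weight by (simp add: Int_def set_diff_eq)
qed

lemma activity_weight_chernoff:
  assumes "0 \<le> p" "p \<le> 1" "0 < t" "A \<subseteq> Pow {0..<N}"
    and "\<And>S. S \<in> A \<Longrightarrow> t powr K \<le> t ^ card S"
  shows "(\<Sum>S\<in>A. activity_weight p N S) \<le> (p * t + (1 - p)) ^ N / t powr K"
proof -
  have "(\<Sum>S\<in>A. activity_weight p N S) \<le> (\<Sum>S\<in>A. activity_weight p N S * t ^ card S / t powr K)"
    using assms by (intro sum_mono) (simp add: le_divide_eq mult_left_mono activity_weight_nonneg)
  also have "\<dots> \<le> (\<Sum>S\<in>Pow {0..<N}. activity_weight p N S * t ^ card S / t powr K)"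
    using assms by (intro sum_mono2) (auto intro!: divide_nonneg_pos mult_nonneg_nonneg activity_weight_nonneg)
  also have "\<dots> = (p * t + (1 - p)) ^ N / t powr K"
    by (simp add: activity_weight_generating_function flip: sum_divide_distrib)
  finally show ?thesis .
qed

lemma success_prob_le_1:
  assumes "0 \<le> p" "p \<le> 1"
  shows "success_prob N p L X g \<le> 1"
proof -
  have "0 \<le> 1 - success_prob N p L X g"
    unfolding one_minus_success_prob using assms by (intro sum_nonneg activity_weight_nonneg)
  then show ?thesis
    by simp
qed

lemma chernoff_rate_pos:
  fixes t :: real
  assumes "0 < t" "t \<noteq> 1"
  shows "0 < t * ln t - t + 1"
proof -
  have "ln (1 / t) \<noteq> 1 / t - 1"
    using ln_eq_minus_one[of "1 / t"] assms by auto
  then have "ln (1 / t) < 1 / t - 1"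
    using ln_le_minus_one[of "1 / t"] assms by simp
  then have "- ln t * t < (1 / t - 1) * t"
    using assms by (intro mult_strict_right_mono) (simp_all add: ln_div)
  then show ?thesis
    using assms by (simp add: algebra_simps)
qed

lemma binomial_mgf_le_exp:
  fixes p t :: real
  assumes "0 \<le> p" "p \<le> 1" "0 < t"
  shows "(p * t + (1 - p)) ^ N / t powr (t * (N * p)) \<le> exp (- (t * ln t - t + 1) * (N * p))"
proof -
  have "p * t + (1 - p) \<le> exp (p * (t - 1))"
    using exp_ge_add_one_self[of "p * (t - 1)"] by (simp add: algebra_simps)
  moreover have "0 \<le> p * t + (1 - p)"
    using assms mult_nonneg_nonneg[of p t] by linarith
  ultimately have "(p * t + (1 - p)) ^ N \<le> exp (p * (t - 1)) ^ N"
    by (rule power_mono)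
  also have "\<dots> = exp (N * p * (t - 1))"
    by (simp add: mult.assoc flip: exp_of_nat_mult)
  finally have "(p * t + (1 - p)) ^ N / t powr (t * (N * p)) \<le> exp (N * p * (t - 1)) / exp (t * (N * p) * ln t)"
    using assms by (simp add: powr_def divide_right_mono)
  also have "\<dots> = exp (- (t * ln t - t + 1) * (N * p))"
    by (simp add: algebra_simps flip: exp_diff)
  finally show ?thesis .
qed

lemma card_correctly_decoded_le: "card {S \<in> Pow {0..<N}. g (or_output L X S) = S} \<le> 2 ^ L"
proof -
  let ?A = "{S \<in> Pow {0..<N}. g (or_output L X S) = S}"
  have "inj_on (or_output L X) ?A"
    by (rule inj_onI) (metis (mono_tags) mem_Collect_eq)
  moreover have "or_output L X ` ?A \<subseteq> Pow {0..<L}"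
    unfolding or_output_def by auto
  ultimately have "card ?A \<le> card (Pow {0..<L})"
    by (intro card_inj_on_le) auto
  also have "\<dots> = 2 ^ L"
    by (simp add: card_Pow)
  finally show ?thesis .
qed

lemma activity_weight_le_powr:
  assumes "0 < p" "p \<le> 1" "K \<le> real (card S)"
  shows "activity_weight p N S \<le> p powr K"
proof -
  have "activity_weight p N S \<le> p ^ card S"
    unfolding activity_weight_def using assms by (intro mult_left_le) (auto intro: power_le_one)
  also have "\<dots> = p powr real (card S)"
    using assms by (simp add: powr_realpow)
  also have "\<dots> \<le> p powr K"
    using assms by (intro powr_mono') auto
  finally show ?thesis .
qed

lemma success_prob_le_chernoff_count:
  fixes p t :: real
  assumes p: "0 < p" "p \<le> 1" and t: "0 < t" "t \<le> 1"
  shows "success_prob N p L X g \<le> exp (- (t * ln t - t + 1) * (N * p)) + 2 ^ L * p powr (t * (N * p))"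
proof -
  define K where "K = t * (N * p)"
  define A where "A = {S \<in> Pow {0..<N}. g (or_output L X S) = S}"
  have "success_prob N p L X g
      = (\<Sum>S\<in>{S \<in> A. card S < K}. activity_weight p N S) + (\<Sum>S\<in>{S \<in> A. K \<le> card S}. activity_weight p N S)"
    unfolding success_prob_eq A_def[symmetric] by (subst sum.union_disjoint[symmetric]) (auto simp: A_def intro!: sum.cong)
  also have "(\<Sum>S\<in>{S \<in> A. card S < K}. activity_weight p N S) \<le> exp (- (t * ln t - t + 1) * (N * p))"
  proof -
    have "t powr K \<le> t ^ card S" if "real (card S) < K" for S
      using that t by (subst powr_realpow[symmetric]) (auto intro: powr_mono')
    then have "(\<Sum>S\<in>{S \<in> A. card S < K}. activity_weight p N S) \<le> (p * t + (1 - p)) ^ N / t powr K"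
      using p t by (intro activity_weight_chernoff) (auto simp: A_def)
    then show ?thesis
      using binomial_mgf_le_exp[of p t N] p t unfolding K_def by linarith
  qed
  also have "(\<Sum>S\<in>{S \<in> A. K \<le> card S}. activity_weight p N S) \<le> real (card {S \<in> A. K \<le> card S}) * p powr K"
    using p by (intro sum_bounded_above activity_weight_le_powr) auto
  also have "\<dots> \<le> 2 ^ L * p powr K"
  proof -
    have "card {S \<in> A. K \<le> card S} \<le> card A"
      unfolding A_def by (intro card_mono) auto
    also have "\<dots> \<le> 2 ^ L"
      unfolding A_def by (rule card_correctly_decoded_le)
    finally have "real (card {S \<in> A. K \<le> card S}) \<le> real (2 ^ L)"
      by (simp only: of_nat_le_iff)
    then show ?thesis
      by (intro mult_right_mono) auto
  qed
  finally show ?thesis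
    unfolding K_def by simp
qed

definition avoiding_choices :: "'a \<Rightarrow> 'a set \<Rightarrow> nat \<Rightarrow> nat \<Rightarrow> 'a \<Rightarrow> nat set" where
  "avoiding_choices i S m v n = (if n = i then {v} else if n \<in> S then {..<m} - {v} else {..<m})"

lemma missing_eq_UN_avoiding_choices:
  assumes i: "i \<in> I - S" and S: "S \<subseteq> I"
  shows "{h \<in> PiE I (\<lambda>_. {..<m}). h i \<notin> h ` S} = (\<Union>v<m. PiE I (avoiding_choices i S m v))"
    (is "?C = ?U")
proof
  show "?C \<subseteq> ?U"
  proof
    fix h assume h: "h \<in> ?C"
    then have "h \<in> PiE I (avoiding_choices i S m (h i))"
      using i unfolding avoiding_choices_def by (auto simp: PiE_iff) (metis imageI)
    moreover have "h i < m"
      using h i by auto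
    ultimately show "h \<in> ?U"
      by blast
  qed
  show "?U \<subseteq> ?C"
  proof
    fix h assume "h \<in> ?U"
    then obtain v where "v < m" and h: "\<And>n. n \<in> I \<Longrightarrow> h n \<in> avoiding_choices i S m v n" "h \<in> extensional I"
      by (auto simp: PiE_iff)
    have hi: "h i = v"
      using h(1)[of i] i unfolding avoiding_choices_def by simp
    have hS: "h n \<noteq> v" if "n \<in> S" for n
      using h(1)[of n] i S that unfolding avoiding_choices_def by (auto split: if_splits)
    have "h n < m" if "n \<in> I" for n
      using h(1)[OF that] \<open>v < m\<close> unfolding avoiding_choices_def by (auto split: if_splits)
    moreover have "h i \<notin> h ` S"
      using hi hS by (metis imageE)
    ultimately show "h \<in> ?C"
      using h(2) by (auto simp: PiE_iff)
  qed
qed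

lemma card_PiE_avoiding_choices:
  assumes I: "finite I" and i: "i \<in> I - S" and S: "S \<subseteq> I" and v: "v < m"
  shows "card (PiE I (avoiding_choices i S m v)) = m ^ (card I - card S - 1) * (m - 1) ^ card S"
proof -
  have "card (PiE I (avoiding_choices i S m v)) = (\<Prod>n\<in>I - {i}. card (avoiding_choices i S m v n))"
    using I i by (simp add: card_PiE prod.remove[of I i] avoiding_choices_def)
  also have "\<dots> = (\<Prod>n\<in>I - {i} - S. card (avoiding_choices i S m v n))
                   * (\<Prod>n\<in>S. card (avoiding_choices i S m v n))"
    using I S i by (intro prod.subset_diff) auto
  also have "\<dots> = (\<Prod>n\<in>I - {i} - S. m) * (\<Prod>n\<in>S. m - 1)"
    using i v by (intro arg_cong2[where f = "(*)"] prod.cong) (auto simp: avoiding_choices_def)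
  also have "\<dots> = m ^ (card I - card S - 1) * (m - 1) ^ card S"
    using I S i finite_subset[OF S I] by (simp add: card_Diff_subset Diff_insert2[symmetric] insert_absorb)
  finally show ?thesis .
qed

lemma card_hitting_functions:
  fixes I S :: "'a set"
  assumes I: "finite I" and i: "i \<in> I - S" and S: "S \<subseteq> I" and m: "0 < m"
  shows "real (card {h \<in> PiE I (\<lambda>_. {..<m}). h i \<in> h ` S})
           = real m ^ card I * (1 - (1 - 1 / real m) ^ card S)"
proof -
  define H where "H = PiE I (\<lambda>_. {..<m})"
  have disjoint: "PiE I (avoiding_choices i S m u) \<inter> PiE I (avoiding_choices i S m v) = {}"
    if "u \<noteq> v" for u v
    using i that by (auto simp: PiE_iff avoiding_choices_def dest!: bspec[of _ _ i])
  have "card S < card I"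
    using S i I by (intro psubset_card_mono) auto
  then have power_split: "real m ^ card I = real m * real m ^ (card I - card S - 1) * real m ^ card S"
    by (simp flip: power_add power_Suc)
  have "card {h \<in> H. h i \<notin> h ` S} = m * (m ^ (card I - card S - 1) * (m - 1) ^ card S)"
    unfolding H_def missing_eq_UN_avoiding_choices[OF i S] using I i S disjoint
    by (subst card_UN_disjoint) (auto simp: card_PiE_avoiding_choices avoiding_choices_def intro!: finite_PiE)
  moreover have "card {h \<in> H. h i \<in> h ` S} + card {h \<in> H. h i \<notin> h ` S} = card H"
    using I unfolding H_def by (subst card_Un_disjoint[symmetric]) (auto intro!: arg_cong[where f = card] finite_PiE)
  moreover have "card H = m ^ card I"
    unfolding H_def using I by (simp add: card_PiE)
  ultimately have "real (card {h \<in> H. h i \<in> h ` S})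
      = real m ^ card I - real m * real m ^ (card I - card S - 1) * real (m - 1) ^ card S"
    by (simp add: algebra_simps flip: of_nat_add of_nat_mult of_nat_power)
  also have "real (m - 1) ^ card S = real m ^ card S * (1 - 1 / real m) ^ card S"
    using m by (simp add: of_nat_diff field_simps flip: power_mult_distrib)
  finally show ?thesis
    unfolding H_def power_split by (simp add: algebra_simps)
qed

definition block_signature :: "nat \<Rightarrow> nat \<Rightarrow> (nat \<Rightarrow> nat \<Rightarrow> nat) \<Rightarrow> nat \<Rightarrow> nat set" where
  "block_signature m w d n = (\<lambda>b. b * m + d b n) ` {..<w}"

definition covering_decoder :: "nat \<Rightarrow> (nat \<Rightarrow> nat set) \<Rightarrow> nat set \<Rightarrow> nat set" where
  "covering_decoder N X y = {n \<in> {0..<N}. X n \<subseteq> y}"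

lemma covering_decoder_error:
  assumes X: "\<And>n. n < N \<Longrightarrow> X n \<subseteq> {..<L}" and S: "S \<subseteq> {0..<N}"
    and err: "covering_decoder N X (or_output L X S) \<noteq> S"
  obtains i where "i \<in> {0..<N} - S" "X i \<subseteq> (\<Union>n\<in>S. X n)"
proof -
  have y: "or_output L X S = (\<Union>n\<in>S. X n)"
    using X S unfolding or_output_def by fastforce
  have "S \<subseteq> covering_decoder N X (or_output L X S)"
    using S unfolding y covering_decoder_def by auto
  with err y that show ?thesis
    unfolding covering_decoder_def by blast
qed

lemma block_signature_subset:
  assumes "\<And>b. b < w \<Longrightarrow> d b n < m"
  shows "block_signature m w d n \<subseteq> {..<m * w}"
proof
  fix l assume "l \<in> block_signature m w d n"
  then obtain b where b: "b < w" "l = b * m + d b n"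
    unfolding block_signature_def by auto
  then have "l < Suc b * m"
    using assms by simp
  also have "\<dots> \<le> w * m"
    using b by (intro mult_le_mono1) simp
  also have "\<dots> = m * w"
    by (rule mult.commute)
  finally show "l \<in> {..<m * w}" by simp
qed

lemma block_signature_covered:
  assumes d: "\<And>b n. b < w \<Longrightarrow> n \<in> insert i S \<Longrightarrow> d b n < m"
    and cov: "block_signature m w d i \<subseteq> (\<Union>n\<in>S. block_signature m w d n)" and b: "b < w"
  shows "d b i \<in> d b ` S"
proof -
  obtain n b' where n: "n \<in> S" "b' < w" and eq: "b * m + d b i = b' * m + d b' n"
    using cov b unfolding block_signature_def by blast
  have "b = b'"
    using arg_cong[OF eq, of "\<lambda>l. l div m"] d[OF b, of i] d[OF n(2), of n] n(1) by simp
  then show ?thesis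
    using eq n by auto
qed

lemma block_design_error_hits:
  assumes d: "d \<in> PiE {..<w} (\<lambda>_. PiE {0..<N} (\<lambda>_. {..<m}))" and S: "S \<subseteq> {0..<N}" and L: "m * w \<le> L"
    and err: "covering_decoder N (block_signature m w d) (or_output L (block_signature m w d) S) \<noteq> S"
  obtains i where "i \<in> {0..<N} - S" "\<And>b. b < w \<Longrightarrow> d b i \<in> d b ` S"
proof -
  have range: "d b n < m" if "b < w" "n < N" for b n
    using PiE_mem[OF PiE_mem[OF d]] that by simp
  have "block_signature m w d n \<subseteq> {..<L}" if "n < N" for n
    using block_signature_subset[of w d n m] range[OF _ that] L by auto
  then obtain i where i: "i \<in> {0..<N} - S"
    and cov: "block_signature m w d i \<subseteq> (\<Union>n\<in>S. block_signature m w d n)"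
    using covering_decoder_error[OF _ S err] by blast
  have "d b i \<in> d b ` S" if "b < w" for b
    by (rule block_signature_covered[OF _ cov that]) (use range i S in auto)
  with i that show ?thesis
    by blast
qed

lemma card_block_design_errors:
  assumes S: "S \<subseteq> {0..<N}" and m: "0 < m" and L: "m * w \<le> L"
  shows "real (card {d \<in> PiE {..<w} (\<lambda>_. PiE {0..<N} (\<lambda>_. {..<m})).
             covering_decoder N (block_signature m w d) (or_output L (block_signature m w d) S) \<noteq> S})
         \<le> real N * (real m ^ N * (1 - (1 - 1 / real m) ^ card S)) ^ w"
    (is "real (card ?E) \<le> _")
proof -
  define Hit where "Hit i = {h \<in> PiE {0..<N} (\<lambda>_. {..<m}). h i \<in> h ` S}" for i
  have "?E \<subseteq> (\<Union>i\<in>{0..<N} - S. PiE {..<w} (\<lambda>_. Hit i))"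
  proof clarify
    fix d assume d: "d \<in> PiE {..<w} (\<lambda>_. PiE {0..<N} (\<lambda>_. {..<m}))"
      and "covering_decoder N (block_signature m w d) (or_output L (block_signature m w d) S) \<noteq> S"
    then obtain i where i: "i \<in> {0..<N} - S" and hit: "\<And>b. b < w \<Longrightarrow> d b i \<in> d b ` S"
      using block_design_error_hits[OF d S L] by blast
    have "d \<in> PiE {..<w} (\<lambda>_. Hit i)"
      using d hit unfolding Hit_def by (auto simp: PiE_iff)
    with i show "d \<in> (\<Union>i\<in>{0..<N} - S. PiE {..<w} (\<lambda>_. Hit i))"
      by blast
  qed
  then have "card ?E \<le> (\<Sum>i\<in>{0..<N} - S. card (PiE {..<w} (\<lambda>_. Hit i)))"
    by (intro order_trans[OF card_mono card_UN_le]) (auto simp: Hit_def intro!: finite_PiE)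
  then have "card ?E \<le> (\<Sum>i\<in>{0..<N} - S. card (Hit i) ^ w)"
    by (simp add: card_PiE)
  then have "real (card ?E) \<le> real (\<Sum>i\<in>{0..<N} - S. card (Hit i) ^ w)"
    by (simp only: of_nat_le_iff)
  also have "\<dots> = (\<Sum>i\<in>{0..<N} - S. real (card (Hit i)) ^ w)"
    by simp
  also have "\<dots> = (\<Sum>i\<in>{0..<N} - S. (real m ^ N * (1 - (1 - 1 / real m) ^ card S)) ^ w)"
    using card_hitting_functions[OF _ _ S m] unfolding Hit_def by simp
  also have "\<dots> \<le> real N * (real m ^ N * (1 - (1 - 1 / real m) ^ card S)) ^ w"
  proof -
    have "0 \<le> 1 - (1 - 1 / real m) ^ card S"
      using m by (simp add: power_le_one)
    moreover have "card ({0..<N} - S) \<le> card {0..<N}"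
      by (rule card_mono) auto
    ultimately show ?thesis
      by (simp add: mult_right_mono)
  qed
  finally show ?thesis .
qed

lemma ex_le_average:
  fixes f :: "'a \<Rightarrow> real"
  assumes "finite D" "D \<noteq> {}" "(\<Sum>d\<in>D. f d) \<le> real (card D) * B"
  shows "\<exists>d\<in>D. f d \<le> B"
proof (rule ccontr)
  assume "\<not> (\<exists>d\<in>D. f d \<le> B)"
  then have "real (card D) * B < (\<Sum>d\<in>D. f d)"
    using assms sum_bounded_above_strict[of D "\<lambda>_. B"] sum_strict_mono[of D "\<lambda>_. B" f]
    by (simp add: not_le)
  with assms show False
    by simp
qed

lemma exists_block_design_error_le_sum:
  assumes p: "0 \<le> p" "p \<le> 1" and m: "0 < m" and L: "m * w \<le> L"
  shows "\<exists>X g. 1 - success_prob N p L X g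
           \<le> real N * (\<Sum>S\<in>Pow {0..<N}. activity_weight p N S * (1 - (1 - 1 / real m) ^ card S) ^ w)"
proof -
  define D where "D = PiE {..<w} (\<lambda>_. PiE {0..<N} (\<lambda>_. {..<m}))"
  define err where "err d S \<longleftrightarrow>
    covering_decoder N (block_signature m w d) (or_output L (block_signature m w d) S) \<noteq> S" for d S
  define B where "B = real N * (\<Sum>S\<in>Pow {0..<N}. activity_weight p N S * (1 - (1 - 1 / real m) ^ card S) ^ w)"
  have failure: "1 - success_prob N p L (block_signature m w d) (covering_decoder N (block_signature m w d))
      = (\<Sum>S\<in>Pow {0..<N}. activity_weight p N S * of_bool (err d S))" for d
    unfolding one_minus_success_prob err_def by (simp add: Int_def)
  have card_D: "card D = (m ^ N) ^ w"
    unfolding D_def by (simp add: card_PiE)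
  have "(\<Sum>d\<in>D. \<Sum>S\<in>Pow {0..<N}. activity_weight p N S * of_bool (err d S))
      = (\<Sum>S\<in>Pow {0..<N}. activity_weight p N S * real (card {d \<in> D. err d S}))"
    by (subst sum.swap) (simp add: D_def finite_PiE Int_def flip: sum_distrib_left)
  also have "\<dots> \<le> (\<Sum>S\<in>Pow {0..<N}. activity_weight p N S * (real N * (real m ^ N * (1 - (1 - 1 / real m) ^ card S)) ^ w))"
    using card_block_design_errors[OF _ m L] p unfolding D_def err_def
    by (intro sum_mono mult_left_mono activity_weight_nonneg) auto
  also have "\<dots> = real (card D) * B"
    unfolding B_def card_D by (simp add: sum_distrib_left power_mult_distrib mult_ac flip: power_mult)
  finally have "(\<Sum>d\<in>D. 1 - success_prob N p L (block_signature m w d) (covering_decoder N (block_signature m w d)))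
      \<le> real (card D) * B"
    unfolding failure .
  moreover have "finite D" "D \<noteq> {}"
    unfolding D_def using m by (auto simp: finite_PiE PiE_eq_empty_iff)
  ultimately obtain d where "1 - success_prob N p L (block_signature m w d) (covering_decoder N (block_signature m w d)) \<le> B"
    using ex_le_average by blast
  then show ?thesis
    unfolding B_def by blast
qed

lemma one_minus_pow_ge_half:
  fixes x :: real
  assumes x: "1 < x" and s: "real s \<le> (x - 1) * ln 2"
  shows "1 / 2 \<le> (1 - 1 / x) ^ s"
proof -
  have "ln (x / (x - 1)) \<le> x / (x - 1) - 1"
    using x by (intro ln_le_minus_one) simp
  also have "\<dots> = 1 / (x - 1)"
    using x by (simp add: field_simps)
  finally have "- 1 / (x - 1) \<le> ln (1 - 1 / x)"
    using x by (simp add: ln_div field_simps)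
  then have "real s * (- 1 / (x - 1)) \<le> real s * ln (1 - 1 / x)"
    by (rule mult_left_mono) simp
  moreover have "- ln 2 \<le> real s * (- 1 / (x - 1))"
    using s x by (simp add: field_simps)
  ultimately have "- ln 2 \<le> real s * ln (1 - 1 / x)"
    by linarith
  then have "exp (- ln 2) \<le> exp (real s * ln (1 - 1 / x))"
    by simp
  then show ?thesis
    using x by (simp add: exp_minus exp_of_nat_mult)
qed

lemma sum_activity_weight_all_blocks_hit_le:
  fixes p t :: real
  assumes p: "0 \<le> p" "p \<le> 1" and t: "1 < t"
    and m: "2 \<le> m" "t * (N * p) \<le> (real m - 1) * ln 2"
  shows "(\<Sum>S\<in>Pow {0..<N}. activity_weight p N S * (1 - (1 - 1 / real m) ^ card S) ^ w)
           \<le> (1 / 2) ^ w + exp (- (t * ln t - t + 1) * (N * p))"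
proof -
  define K where "K = t * (N * p)"
  define q where "q S = 1 - (1 - 1 / real m) ^ card S" for S :: "nat set"
  have q: "0 \<le> q S" "q S \<le> 1" for S
    unfolding q_def using m by (auto intro: power_le_one)
  have "activity_weight p N S * q S ^ w
      \<le> activity_weight p N S * (1 / 2) ^ w + activity_weight p N S * of_bool (K < card S)" for S
  proof (cases "K < card S")
    case True
    have "activity_weight p N S * q S ^ w \<le> activity_weight p N S"
      using p q by (intro mult_left_le activity_weight_nonneg power_le_one) auto
    moreover have "0 \<le> activity_weight p N S * (1 / 2) ^ w"
      using p by (simp add: activity_weight_nonneg)
    ultimately show ?thesis
      using True by simp
  next
    case False
    then have "1 / 2 \<le> (1 - 1 / real m) ^ card S"
      using m unfolding K_def by (intro one_minus_pow_ge_half) auto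
    then have "q S ^ w \<le> (1 / 2) ^ w"
      using q unfolding q_def by (intro power_mono) auto
    then show ?thesis
      using False p by (simp add: activity_weight_nonneg mult_left_mono)
  qed
  then have "(\<Sum>S\<in>Pow {0..<N}. activity_weight p N S * q S ^ w)
      \<le> (1 / 2) ^ w + (\<Sum>S\<in>{S \<in> Pow {0..<N}. K < card S}. activity_weight p N S)"
    by (rule order_trans[OF sum_mono]) (simp add: sum.distrib Int_def sum_activity_weight flip: sum_distrib_right)
  also have "(\<Sum>S\<in>{S \<in> Pow {0..<N}. K < card S}. activity_weight p N S) \<le> (p * t + (1 - p)) ^ N / t powr K"
    using p t by (intro activity_weight_chernoff) (auto simp flip: powr_realpow intro: powr_mono)
  also have "\<dots> \<le> exp (- (t * ln t - t + 1) * (N * p))"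
    unfolding K_def using p t by (intro binomial_mgf_le_exp) auto
  finally show ?thesis
    unfolding q_def by simp
qed

lemma exists_block_design_error_le:
  fixes p t :: real
  assumes p: "0 \<le> p" "p \<le> 1" and t: "1 < t"
    and m: "2 \<le> m" "t * (N * p) \<le> (real m - 1) * ln 2" and L: "m * w \<le> L"
  shows "\<exists>X g. 1 - success_prob N p L X g \<le> N * ((1 / 2) ^ w + exp (- (t * ln t - t + 1) * (N * p)))"
proof -
  obtain X g where "1 - success_prob N p L X g
      \<le> N * (\<Sum>S\<in>Pow {0..<N}. activity_weight p N S * (1 - (1 - 1 / real m) ^ card S) ^ w)"
    using exists_block_design_error_le_sum[OF p _ L, where N = N] m by auto
  also have "\<dots> \<le> N * ((1 / 2) ^ w + exp (- (t * ln t - t + 1) * (N * p)))"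
    using sum_activity_weight_all_blocks_hit_le[OF p t m] by (intro mult_left_mono) auto
  finally show ?thesis
    by blast
qed

lemma block_design_fits:
  fixes t x y \<Omega> :: real
  assumes t: "0 < t" and x: "0 \<le> x" and y: "0 \<le> y"
    and slack: "t * x / ln 2 + 3 * t * y + 4 \<le> (\<Omega> - t\<^sup>2 / ln 2) * x * y"
  shows "(nat \<lceil>t * x / ln 2\<rceil> + 2) * nat \<lceil>t * y\<rceil> \<le> nat (round (\<Omega> * x * y))"
proof -
  have "real (nat \<lceil>t * x / ln 2\<rceil> + 2) \<le> t * x / ln 2 + 3"
    using t x ceiling_correct[of "t * x / ln 2"] by (simp add: of_nat_nat)
  moreover have "real (nat \<lceil>t * y\<rceil>) \<le> t * y + 1"
    using t y ceiling_correct[of "t * y"] by (simp add: of_nat_nat)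
  moreover have "0 \<le> t * x / ln 2" "0 \<le> t * y"
    using t x y by simp_all
  ultimately have "real ((nat \<lceil>t * x / ln 2\<rceil> + 2) * nat \<lceil>t * y\<rceil>) \<le> (t * x / ln 2 + 3) * (t * y + 1)"
    unfolding of_nat_mult by (intro mult_mono) auto
  also have "\<dots> = t\<^sup>2 / ln 2 * x * y + (t * x / ln 2 + 3 * t * y + 3)"
    by (simp add: algebra_simps power2_eq_square add_divide_distrib)
  also have "\<dots> \<le> \<Omega> * x * y - 1"
    using slack by (simp add: left_diff_distrib)
  also have "\<dots> \<le> real (nat (round (\<Omega> * x * y)))"
    using of_int_round_ge[of "\<Omega> * x * y"] by linarith
  finally show ?thesis
    by (simp only: of_nat_le_iff)
qed

lemma eventually_block_design_fits:
  fixes Na :: "nat \<Rightarrow> real"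
  assumes \<beta>: "0 < \<beta>" and c1: "0 < c1" and t: "0 < t" and \<Omega>: "t\<^sup>2 / ln 2 < \<Omega>"
    and Na: "\<forall>\<^sub>F N in sequentially. c1 * real N powr \<beta> \<le> Na N"
  shows "\<forall>\<^sub>F N in sequentially.
           (nat \<lceil>t * Na N / ln 2\<rceil> + 2) * nat \<lceil>t * log 2 N\<rceil> \<le> nat (round (\<Omega> * Na N * log 2 N))"
proof -
  define \<epsilon> where "\<epsilon> = \<Omega> - t\<^sup>2 / ln 2"
  have \<epsilon>: "0 < \<epsilon>"
    using \<Omega> unfolding \<epsilon>_def by simp
  have "\<forall>\<^sub>F N in sequentially. t / ln 2 \<le> \<epsilon> * log 2 (real N)"
    using \<epsilon> by real_asymp
  moreover have "\<forall>\<^sub>F N in sequentially.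
      3 * t * log 2 (real N) + 4 \<le> c1 * real N powr \<beta> * (\<epsilon> * log 2 (real N) - t / ln 2)"
    using \<epsilon> \<beta> c1 by real_asymp
  ultimately show ?thesis
    using Na eventually_ge_at_top[of 1]
  proof eventually_elim
    case (elim N)
    have "0 \<le> c1 * real N powr \<beta>"
      using c1 by simp
    then have x: "0 \<le> Na N"
      using elim by linarith
    have "3 * t * log 2 N + 4 \<le> c1 * real N powr \<beta> * (\<epsilon> * log 2 N - t / ln 2)"
      using elim by simp
    also have "\<dots> \<le> Na N * (\<epsilon> * log 2 N - t / ln 2)"
      using elim by (intro mult_right_mono) auto
    finally have "t * Na N / ln 2 + 3 * t * log 2 N + 4 \<le> \<epsilon> * Na N * log 2 N"
      by (simp add: algebra_simps)
    then show ?case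
      unfolding \<epsilon>_def using t x elim by (intro block_design_fits) auto
  qed
qed

lemma mult_half_pow_ceiling_log_le:
  fixes t :: real
  assumes "1 \<le> N"
  shows "real N * (1 / 2) ^ nat \<lceil>t * log 2 N\<rceil> \<le> real N powr (1 - t)"
proof -
  have "(1 / 2 :: real) ^ nat \<lceil>t * log 2 N\<rceil> = 2 powr - real (nat \<lceil>t * log 2 N\<rceil>)"
    by (simp add: powr_minus powr_realpow field_simps)
  also have "\<dots> \<le> 2 powr - (t * log 2 N)"
    by (intro powr_mono) (auto simp: of_nat_nat intro: order_trans[OF le_of_int_ceiling])
  also have "\<dots> = (2 powr log 2 N) powr - t"
    by (simp add: powr_powr mult.commute)
  also have "\<dots> = real N powr - t"
    using assms by simp
  finally show ?thesis
    using assms by (simp add: powr_diff powr_minus field_simps)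
qed

lemma le_nat_ceiling_div_ln2:
  fixes z :: real
  shows "z \<le> (real (nat \<lceil>z / ln 2\<rceil> + 2) - 1) * ln 2"
proof -
  have "z \<le> real (nat \<lceil>z / ln 2\<rceil>) * ln 2"
    using real_nat_ceiling_ge[of "z / ln 2"] by (simp add: pos_divide_le_eq)
  moreover have "(real (nat \<lceil>z / ln 2\<rceil> + 2) - 1) * ln 2 = real (nat \<lceil>z / ln 2\<rceil>) * ln 2 + ln 2"
    by (simp add: algebra_simps)
  moreover have "0 < ln (2 :: real)"
    by simp
  ultimately show ?thesis
    by linarith
qed

lemma exists_block_design_sequence:
  fixes p :: "nat \<Rightarrow> real" and t :: real
  assumes p: "\<And>N. 0 \<le> p N" "\<And>N. p N \<le> 1" and t: "1 < t"
  obtains X g where "\<And>N. (nat \<lceil>t * (N * p N) / ln 2\<rceil> + 2) * w N \<le> L N \<Longrightarrow>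
    1 - success_prob N (p N) (L N) (X N) (g N) \<le> N * ((1 / 2) ^ w N + exp (- (t * ln t - t + 1) * (N * p N)))"
proof -
  have "\<exists>X g. (nat \<lceil>t * (N * p N) / ln 2\<rceil> + 2) * w N \<le> L N \<longrightarrow>
    1 - success_prob N (p N) (L N) X g \<le> N * ((1 / 2) ^ w N + exp (- (t * ln t - t + 1) * (N * p N)))" for N
  proof (cases "(nat \<lceil>t * (N * p N) / ln 2\<rceil> + 2) * w N \<le> L N")
    case True
    with exists_block_design_error_le[OF p(1)[of N] p(2)[of N] t _ le_nat_ceiling_div_ln2 True] show ?thesis
      by auto
  qed auto
  then have "\<forall>N. \<exists>X g. (nat \<lceil>t * (N * p N) / ln 2\<rceil> + 2) * w N \<le> L N \<longrightarrow>
    1 - success_prob N (p N) (L N) X g \<le> N * ((1 / 2) ^ w N + exp (- (t * ln t - t + 1) * (N * p N)))"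
    by blast
  from choice[OF this] obtain X where "\<forall>N. \<exists>g. (nat \<lceil>t * (N * p N) / ln 2\<rceil> + 2) * w N \<le> L N \<longrightarrow>
    1 - success_prob N (p N) (L N) (X N) g \<le> N * ((1 / 2) ^ w N + exp (- (t * ln t - t + 1) * (N * p N)))"
    ..
  from choice[OF this] obtain g where "\<forall>N. (nat \<lceil>t * (N * p N) / ln 2\<rceil> + 2) * w N \<le> L N \<longrightarrow>
    1 - success_prob N (p N) (L N) (X N) (g N) \<le> N * ((1 / 2) ^ w N + exp (- (t * ln t - t + 1) * (N * p N)))"
    ..
  with that show ?thesis
    by blast
qed

lemma achievability_error_limit:
  assumes "0 < \<delta>" "0 < c" "0 < c1" "0 < \<beta>"
  shows "(\<lambda>N. 1 - (real N powr - \<delta> + N * exp (- c * (c1 * real N powr \<beta>)))) \<longlonglongrightarrow> 1"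
  using assms by real_asymp

lemma feasible_cost_gt_inverse_ln2:
  fixes Na :: "nat \<Rightarrow> real"
  assumes \<beta>: "0 < \<beta>" and c1: "0 < c1"
    and Na: "\<And>N. N \<ge> 1 \<Longrightarrow> 0 < Na N \<and> Na N \<le> real N"
    and Na_lower: "\<forall>\<^sub>F N in sequentially. c1 * real N powr \<beta> \<le> Na N"
    and \<Omega>: "1 / ln 2 < \<Omega>"
  shows "feasible_cost Na \<Omega>"
proof -
  define t where "t = sqrt ((1 + \<Omega> * ln 2) / 2)"
  have "1 < \<Omega> * ln 2"
    using \<Omega> by (simp add: field_simps)
  then have t: "1 < t" and t2: "t\<^sup>2 / ln 2 < \<Omega>"
    unfolding t_def by (simp_all add: field_simps)
  define c where "c = t * ln t - t + 1"
  have c: "0 < c"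
    unfolding c_def using t by (intro chernoff_rate_pos) auto
  define p where "p N = Na N / real N" for N
  define L where "L N = nat (round (\<Omega> * Na N * log 2 N))" for N
  have p: "0 \<le> p N" "p N \<le> 1" for N
    using Na[of N] by (cases "N = 0"; auto simp: p_def divide_le_eq)+
  obtain X g where fail: "\<And>N. (nat \<lceil>t * (N * p N) / ln 2\<rceil> + 2) * nat \<lceil>t * log 2 N\<rceil> \<le> L N \<Longrightarrow>
      1 - success_prob N (p N) (L N) (X N) (g N) \<le> N * ((1 / 2) ^ nat \<lceil>t * log 2 N\<rceil> + exp (- c * (N * p N)))"
    by (rule exists_block_design_sequence[where p = p and w = "\<lambda>N. nat \<lceil>t * log 2 N\<rceil>" and L = L,
          OF p t, folded c_def]) blast
  define f where "f N = success_prob N (p N) (L N) (X N) (g N)" for N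
  have lower: "\<forall>\<^sub>F N in sequentially. 1 - (real N powr - (t - 1) + N * exp (- c * (c1 * real N powr \<beta>))) \<le> f N"
    using eventually_block_design_fits[OF \<beta> c1 less_trans[OF zero_less_one t] t2 Na_lower]
      Na_lower eventually_ge_at_top[of 1]
  proof eventually_elim
    case (elim N)
    then have "N * p N = Na N"
      by (simp add: p_def)
    then have "1 - f N \<le> N * (1 / 2) ^ nat \<lceil>t * log 2 N\<rceil> + N * exp (- c * Na N)"
      using fail[of N] elim unfolding f_def L_def by (simp add: distrib_left)
    also have "N * (1 / 2) ^ nat \<lceil>t * log 2 N\<rceil> \<le> real N powr - (t - 1)"
      unfolding minus_diff_eq using elim by (intro mult_half_pow_ceiling_log_le) auto
    also have "N * exp (- c * Na N) \<le> N * exp (- c * (c1 * real N powr \<beta>))"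
      using elim c by (intro mult_left_mono) auto
    finally show ?case
      by simp
  qed
  have upper: "\<forall>\<^sub>F N in sequentially. f N \<le> 1"
    unfolding f_def using p by (intro always_eventually allI success_prob_le_1)
  have "(\<lambda>N. 1 - (real N powr - (t - 1) + N * exp (- c * (c1 * real N powr \<beta>)))) \<longlonglongrightarrow> 1"
    using t c c1 \<beta> by (intro achievability_error_limit) auto
  then have "f \<longlonglongrightarrow> 1"
    by (rule tendsto_sandwich[OF lower upper _ tendsto_const])
  then show ?thesis
    unfolding feasible_cost_def f_def p_def L_def by blast
qed

lemma two_pow_mult_powr_le_exp:
  fixes p c x \<theta> t \<beta> :: real
  assumes p: "0 < p" "p \<le> c * real N powr (\<beta> - 1)" and N: "1 \<le> N" and x: "0 \<le> x" and t: "0 < t"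
    and L: "real L \<le> \<theta> * x * log 2 N + 1"
  shows "2 ^ L * p powr (t * x) \<le> 2 * exp (x * (t * ln c - (t * (1 - \<beta>) - \<theta>) * ln N))"
proof -
  have "0 < c * real N powr (\<beta> - 1)"
    using p by linarith
  then have c: "0 < c"
    by (simp add: zero_less_mult_iff)
  have "(2 :: real) ^ L = 2 powr real L"
    by (simp add: powr_realpow)
  also have "\<dots> \<le> 2 powr (\<theta> * x * log 2 N + 1)"
    using L by simp
  also have "\<dots> = 2 * (2 powr log 2 N) powr (\<theta> * x)"
    by (simp add: powr_add powr_powr mult.commute)
  also have "\<dots> = 2 * exp (\<theta> * x * ln N)"
    using N by (simp add: powr_def log_def)
  finally have two_pow: "(2 :: real) ^ L \<le> 2 * exp (\<theta> * x * ln N)" .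
  have "ln p \<le> ln (c * real N powr (\<beta> - 1))"
    using p by simp
  also have "\<dots> = ln c + (\<beta> - 1) * ln N"
    using c N by (simp add: ln_mult ln_powr)
  finally have "p powr (t * x) \<le> exp (t * x * (ln c + (\<beta> - 1) * ln N))"
    using p t x by (simp add: powr_def mult_left_mono)
  with two_pow have "2 ^ L * p powr (t * x) \<le> 2 * exp (\<theta> * x * ln N) * exp (t * x * (ln c + (\<beta> - 1) * ln N))"
    by (intro mult_mono) auto
  also have "\<dots> = 2 * exp (x * (t * ln c - (t * (1 - \<beta>) - \<theta>) * ln N))"
    by (simp add: algebra_simps flip: exp_add)
  finally show ?thesis .
qed

lemma nat_round_le_max_mult:
  fixes \<Omega> x y :: real
  assumes "0 \<le> x" "0 \<le> y"
  shows "real (nat (round (\<Omega> * x * y))) \<le> max \<Omega> 0 * x * y + 1"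
proof -
  have "real (nat (round (\<Omega> * x * y))) \<le> max (\<Omega> * x * y) 0 + 1"
    using of_int_round_le[of "\<Omega> * x * y"] by (simp add: of_nat_nat)
  also have "max (\<Omega> * x * y) 0 = max \<Omega> 0 * x * y"
    using assms by (simp add: max_mult_distrib_right mult.assoc)
  finally show ?thesis .
qed

lemma eventually_success_prob_le:
  fixes Na :: "nat \<Rightarrow> real"
  assumes Na: "\<And>N. N \<ge> 1 \<Longrightarrow> 0 < Na N \<and> Na N \<le> real N"
    and Na_bounds: "\<forall>\<^sub>F N in sequentially. c1 * real N powr \<beta> \<le> Na N \<and> Na N \<le> c2 * real N powr \<beta>"
    and t: "0 < t" "t \<le> 1" and \<gamma>: "0 < \<gamma>" "\<gamma> = t * (1 - \<beta>) - max \<Omega> 0"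
  shows "\<forall>\<^sub>F N in sequentially.
           success_prob N (Na N / N) (nat (round (\<Omega> * Na N * log 2 N))) (X N) (g N)
           \<le> exp (- (t * ln t - t + 1) * (c1 * real N powr \<beta>))
              + 2 * exp (c1 * real N powr \<beta> * (t * ln c2 - \<gamma> * ln N))"
proof -
  have "\<forall>\<^sub>F N in sequentially. t * ln c2 - \<gamma> * ln N \<le> 0"
    using \<gamma> by real_asymp
  then show ?thesis
    using Na_bounds eventually_ge_at_top[of 1]
  proof eventually_elim
    case (elim N)
    define x where "x = Na N"
    have x: "c1 * real N powr \<beta> \<le> x" "x \<le> c2 * real N powr \<beta>" and N: "1 \<le> N"
      using elim unfolding x_def by auto
    have x0: "0 < x" and p: "0 < x / N" "x / N \<le> 1" and Np: "N * (x / N) = x"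
      using Na[OF N] N unfolding x_def by auto
    have "x / N \<le> c2 * real N powr (\<beta> - 1)"
      using x(2) N by (simp add: powr_diff divide_right_mono)
    moreover have "real (nat (round (\<Omega> * x * log 2 N))) \<le> max \<Omega> 0 * x * log 2 N + 1"
      using x0 N by (intro nat_round_le_max_mult) auto
    ultimately have two_pow: "2 ^ nat (round (\<Omega> * x * log 2 N)) * (x / N) powr (t * x)
        \<le> 2 * exp (x * (t * ln c2 - \<gamma> * ln N))"
      unfolding \<gamma>(2) using p(1) N x0 t by (intro two_pow_mult_powr_le_exp) auto
    have "0 \<le> t * ln t - t + 1"
      using chernoff_rate_pos[of t] t by (cases "t = 1") auto
    then have "- (t * ln t - t + 1) * x \<le> - (t * ln t - t + 1) * (c1 * real N powr \<beta>)"
      using x(1) by (intro mult_left_mono_neg) auto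
    then have "exp (- (t * ln t - t + 1) * x) \<le> exp (- (t * ln t - t + 1) * (c1 * real N powr \<beta>))"
      by (simp only: exp_le_cancel_iff)
    moreover have "success_prob N (x / N) (nat (round (\<Omega> * x * log 2 N))) (X N) (g N)
        \<le> exp (- (t * ln t - t + 1) * x) + 2 ^ nat (round (\<Omega> * x * log 2 N)) * (x / N) powr (t * x)"
      using success_prob_le_chernoff_count[where N = N, OF p t] unfolding Np .
    moreover have "2 * exp (x * (t * ln c2 - \<gamma> * ln N))
        \<le> 2 * exp (c1 * real N powr \<beta> * (t * ln c2 - \<gamma> * ln N))"
      using x(1) elim by (simp add: mult_right_mono_neg mult.commute)
    ultimately have "success_prob N (x / N) (nat (round (\<Omega> * x * log 2 N))) (X N) (g N)
        \<le> exp (- (t * ln t - t + 1) * (c1 * real N powr \<beta>))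
           + 2 * exp (c1 * real N powr \<beta> * (t * ln c2 - \<gamma> * ln N))"
      using two_pow by linarith
    then show ?case
      unfolding x_def .
  qed
qed

lemma converse_error_limit:
  assumes "0 < c" "0 < c1" "0 < \<beta>" "0 < \<gamma>"
  shows "(\<lambda>N. exp (- c * (c1 * real N powr \<beta>)) + 2 * exp (c1 * real N powr \<beta> * (a - \<gamma> * ln N))) \<longlonglongrightarrow> 0"
  using assms by real_asymp

lemma feasible_cost_lower_bound:
  fixes Na :: "nat \<Rightarrow> real"
  assumes \<beta>: "0 < \<beta>" "\<beta> < 1" and c1: "0 < c1"
    and Na: "\<And>N. N \<ge> 1 \<Longrightarrow> 0 < Na N \<and> Na N \<le> real N"
    and Na_bounds: "\<forall>\<^sub>F N in sequentially. c1 * real N powr \<beta> \<le> Na N \<and> Na N \<le> c2 * real N powr \<beta>"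
    and feasible: "feasible_cost Na \<Omega>"
  shows "1 - \<beta> \<le> \<Omega>"
proof (rule ccontr)
  assume "\<not> 1 - \<beta> \<le> \<Omega>"
  define \<theta> where "\<theta> = max \<Omega> 0"
  have \<theta>: "\<theta> < 1 - \<beta>"
    using \<open>\<not> 1 - \<beta> \<le> \<Omega>\<close> \<beta> unfolding \<theta>_def by auto
  define t where "t = (1 - \<beta> + \<theta>) / (2 * (1 - \<beta>))"
  define \<gamma> where "\<gamma> = t * (1 - \<beta>) - \<theta>"
  have t: "0 < t" "t < 1"
    using \<theta> \<beta> unfolding t_def \<theta>_def by (simp_all add: pos_divide_less_eq)
  have "t * (1 - \<beta>) = (1 - \<beta> + \<theta>) / 2"
    using \<beta> unfolding t_def by (simp add: field_simps)
  then have \<gamma>: "0 < \<gamma>"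
    using \<theta> unfolding \<gamma>_def by (simp add: field_simps)
  define c where "c = t * ln t - t + 1"
  have c: "0 < c"
    unfolding c_def using t by (intro chernoff_rate_pos) auto
  obtain X g where lim:
    "(\<lambda>N. success_prob N (Na N / N) (nat (round (\<Omega> * Na N * log 2 N))) (X N) (g N)) \<longlonglongrightarrow> 1"
    using feasible unfolding feasible_cost_def by blast
  moreover have "(\<lambda>N. exp (- c * (c1 * real N powr \<beta>)) + 2 * exp (c1 * real N powr \<beta> * (t * ln c2 - \<gamma> * ln N)))
      \<longlonglongrightarrow> 0"
    using c c1 \<beta> \<gamma> by (intro converse_error_limit) auto
  moreover note eventually_success_prob_le[OF Na Na_bounds t(1) less_imp_le[OF t(2)] \<gamma> \<gamma>_def[unfolded \<theta>_def],
      folded c_def]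
  ultimately have "1 \<le> (0 :: real)"
    by (intro tendsto_le[OF trivial_limit_sequentially]) auto
  then show False
    by simp
qed

theorem proposition3:
  fixes \<beta> c1 c2 :: real and Na :: "nat \<Rightarrow> real"
  assumes "0 < \<beta>" "\<beta> < 1"
    and "0 < c1" "c1 \<le> c2"
    and "\<And>N. N \<ge> 1 \<Longrightarrow> 0 < Na N \<and> Na N \<le> real N"
    and "\<forall>\<^sub>F N in sequentially. c1 * real N powr \<beta> \<le> Na N \<and> Na N \<le> c2 * real N powr \<beta>"
  shows "(\<forall>\<Omega>. feasible_cost Na \<Omega> \<longrightarrow> \<Omega> \<ge> 1 - \<beta>)
       \<and> (\<forall>\<Omega>. \<Omega> > 1 / ln 2 \<longrightarrow> feasible_cost Na \<Omega>)
       \<and> Inf {\<Omega>. feasible_cost Na \<Omega>} \<in> {1 - \<beta> .. 1 / ln 2}"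
proof -
  define F where "F = {\<Omega>. feasible_cost Na \<Omega>}"
  have lower: "\<forall>\<Omega>. feasible_cost Na \<Omega> \<longrightarrow> \<Omega> \<ge> 1 - \<beta>"
    using feasible_cost_lower_bound[OF assms(1-3,5,6)] by blast
  have "\<forall>\<^sub>F N in sequentially. c1 * real N powr \<beta> \<le> Na N"
    using assms(6) by (rule eventually_mono) simp
  then have upper: "\<forall>\<Omega>. \<Omega> > 1 / ln 2 \<longrightarrow> feasible_cost Na \<Omega>"
    using feasible_cost_gt_inverse_ln2[OF assms(1,3,5)] by blast
  then have "F \<noteq> {}" and bdd: "bdd_below F"
    using lower unfolding F_def by (auto intro!: exI[of _ "1 / ln 2 + 1"] bdd_belowI[of _ "1 - \<beta>"])
  then have "1 - \<beta> \<le> Inf F"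
    using lower unfolding F_def by (intro cInf_greatest) auto
  moreover have "Inf F \<le> 1 / ln 2"
  proof (rule field_le_epsilon)
    fix \<epsilon> :: real assume "0 < \<epsilon>"
    then show "Inf F \<le> 1 / ln 2 + \<epsilon>"
      using upper bdd unfolding F_def by (intro cInf_lower) auto
  qed
  ultimately show ?thesis
    using lower upper unfolding F_def by auto
qed

end
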